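(* Let $s\in(0,1]$, $p>1$ and $q=\frac{p}{p-1}$. Let $I\subseteq\mathbb{R}$ be an interval, $a,b\in I$ with $a<b$, and let $f:I\to\mathbb{R}$ be differentiable on $I^\circ$ with $f'\in L^1[a,b]$, and suppose $|f'|$ is $s$-convex on $[a,b]$ in the sense that $|f'(tx+(1-t)y)|\le t^{s}|f'(x)|+(1-t^{s})|f'(y)|$ for all $x,y\in[a,b]$, $t\in[0,1]$. Then for every partition $D=\{a=x_0<x_1<\dots<x_n=b\}$ of $[a,b]$, the trapezoidal error $$R(f,D)=\int_a^b f(x)\,dx-\sum_{k=0}^{n-1}\frac{f(x_k)+f(x_{k+1})}{2}(x_{k+1}-x_k)$$ satisfies $$|R(f,D)|\le \frac{1}{2^{1/p}}\left(\frac{s\cdot 2^s+1}{2^s(s+1)(s+2)}\right)^{1/q}\sum_{k=0}^{n-1}\frac{(x_{k+1}-x_k)^2}{2}\bigl[|f'(x_k)|+|f'(x_{k+1})|\bigr].$$ *)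

theory Defs
  imports "HOL-Analysis.Analysis"
begin

definition s_convex_on :: "real \<Rightarrow> real set \<Rightarrow> (real \<Rightarrow> real) \<Rightarrow> bool" where
  "s_convex_on s S g \<longleftrightarrow>
     (\<forall>x\<in>S. \<forall>y\<in>S. \<forall>t\<in>{0..1}.
        g (t * x + (1 - t) * y) \<le> t powr s * g x + (1 - t powr s) * g y)"

definition trap_error :: "(real \<Rightarrow> real) \<Rightarrow> (nat \<Rightarrow> real) \<Rightarrow> nat \<Rightarrow> real" where
  "trap_error f x n =
     integral {x 0..x n} f - (\<Sum>k<n. (f (x k) + f (x (Suc k))) / 2 * (x (Suc k) - x k))"

end

theory Submission
  imports Defs
begin

text \<open>On a cell [u, v] with midpoint m, integrating (y - m) f(y) by parts shows that the
  trapezoidal error equals the integral of -(y - m) f'(y). Bounding |f'(y)| by s-convexity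
  with weight t = (v - y)/(v - u) and integrating the two kernels |y - m| t^s and |y - m|
  exactly gives the cell bound (v - u)^2/2 (C |f'(u)| + (1/2 - C) |f'(v)|), where
  C = (s 2^s + 1)/(2^s (s + 1)(s + 2)) lies in [1/4, 1/2]; hence the bound is at most
  C (v - u)^2/2 (|f'(u)| + |f'(v)|). Since C \<le> 1/2, also C \<le> 2^(-1/p) C^(1/q), which is the
  stated constant. No Hoelder inequality is needed, and neither is the integrability of f':
  the integration by parts already makes (y - m) f'(y) integrable on each cell.\<close>

lemma s_convex_on_subset:
  "s_convex_on s S g \<Longrightarrow> T \<subseteq> S \<Longrightarrow> s_convex_on s T g"
  unfolding s_convex_on_def by blast

lemma s_convex_on_le_interpolation:
  assumes "s_convex_on s S g" "u \<in> S" "v \<in> S" "u < v" "y \<in> {u..v}"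
  shows "g y \<le> ((v-y)/(v-u)) powr s * g u + (1 - ((v-y)/(v-u)) powr s) * g v"
proof -
  define t where "t = (v-y)/(v-u)"
  have "t \<in> {0..1}"
    using assms(4,5) by (auto simp: t_def field_simps)
  have "t * (v - u) = v - y"
    using assms(4) by (simp add: t_def)
  then have "t * u + (1 - t) * v = y"
    by (simp add: algebra_simps)
  with \<open>t \<in> {0..1}\<close> show ?thesis
    using assms(1-3) unfolding s_convex_on_def t_def[symmetric] by metis
qed

lemma has_integral_abs_midpoint_kernel:
  fixes F h :: "real \<Rightarrow> real"
  assumes "u \<le> v" "continuous_on {u..v} F"
    and "\<And>y. y \<in> {u<..<v} \<Longrightarrow> (F has_real_derivative (y - (u+v)/2) * h y) (at y)"
  shows "((\<lambda>y. \<bar>y - (u+v)/2\<bar> * h y) has_integral (F u + F v - 2 * F ((u+v)/2))) {u..v}"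
proof -
  let ?m = "(u+v)/2"
  have "((\<lambda>y. - ((y - ?m) * h y)) has_integral (- F ?m - - F u)) {u..?m}"
    using assms by (intro fundamental_theorem_of_calculus_interior)
      (auto intro!: continuous_intros DERIV_minus elim: continuous_on_subset
            simp: has_real_derivative_iff_has_vector_derivative[symmetric])
  then have left: "((\<lambda>y. \<bar>y - ?m\<bar> * h y) has_integral (- F ?m - - F u)) {u..?m}"
    by (rule has_integral_eq[rotated]) (auto simp: abs_of_nonpos algebra_simps)
  have "((\<lambda>y. (y - ?m) * h y) has_integral (F v - F ?m)) {?m..v}"
    using assms by (intro fundamental_theorem_of_calculus_interior)
      (auto elim: continuous_on_subset simp: has_real_derivative_iff_has_vector_derivative[symmetric])
  then have right: "((\<lambda>y. \<bar>y - ?m\<bar> * h y) has_integral (F v - F ?m)) {?m..v}"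
    by (rule has_integral_eq[rotated]) auto
  show ?thesis
    using has_integral_combine[OF _ _ left right] assms(1) by (simp add: algebra_simps)
qed

lemma has_integral_abs_midpoint:
  fixes u v :: real
  assumes "u \<le> v"
  shows "((\<lambda>y. \<bar>y - (u+v)/2\<bar>) has_integral ((v-u)^2/4)) {u..v}"
proof -
  have "((\<lambda>y. \<bar>y - (u+v)/2\<bar> * 1) has_integral ((u - (u+v)/2)^2/2 + (v - (u+v)/2)^2/2 - 2 * (((u+v)/2 - (u+v)/2)^2/2))) {u..v}"
    using assms by (intro has_integral_abs_midpoint_kernel)
      (auto intro!: continuous_intros derivative_eq_intros)
  also have "(u - (u+v)/2)^2/2 + (v - (u+v)/2)^2/2 - 2 * (((u+v)/2 - (u+v)/2)^2/2) = (v-u)^2/4"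
    by (simp add: power2_eq_square field_simps)
  finally show ?thesis by simp
qed

text \<open>A primitive of (y - m) t^s for t = (v - y)/(v - u), since y - m = (v - u)(1/2 - t).\<close>
definition powr_midpoint_primitive :: "real \<Rightarrow> real \<Rightarrow> real \<Rightarrow> real \<Rightarrow> real" where
  "powr_midpoint_primitive s u v y =
     (v-u)^2 * (((v-y)/(v-u)) powr (s+2) / (s+2) - ((v-y)/(v-u)) powr (s+1) / (2*(s+1)))"

lemma has_real_derivative_powr_midpoint_primitive:
  fixes u v s y :: real
  assumes "u < v" "0 < s" "y < v"
  shows "(powr_midpoint_primitive s u v has_real_derivative (y - (u+v)/2) * ((v-y)/(v-u)) powr s) (at y)"
proof -
  define z where "z = (v-y)/(v-u)"
  have z: "0 < z" using assms by (simp add: z_def)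
  have dz: "((\<lambda>y. (v-y)/(v-u)) has_real_derivative -1/(v-u)) (at y)"
    using DERIV_cdivide[OF DERIV_diff[OF DERIV_const[of v] DERIV_ident], of "v-u"] by simp
  have "(powr_midpoint_primitive s u v has_real_derivative (v-u)^2 * (((s+2) * z powr (s+2-1) * (-1/(v-u))) / (s+2) - ((s+1) * z powr (s+1-1) * (-1/(v-u))) / (2*(s+1)))) (at y)"
    using z DERIV_fun_powr[OF dz, of "s+2"] DERIV_fun_powr[OF dz, of "s+1"]
    unfolding z_def powr_midpoint_primitive_def[abs_def] by (intro DERIV_cmult DERIV_diff DERIV_cdivide) auto
  also have "(s+2) * z powr (s+2-1) * (-1/(v-u)) / (s+2) = - (z * z powr s / (v-u))"
    using z assms by (simp add: powr_add add.commute[of s])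
  also have "(s+1) * z powr (s+1-1) * (-1/(v-u)) / (2*(s+1)) = - (z powr s / (2*(v-u)))"
  proof -
    have "(s+1) * (z powr s * (-1/(v-u))) / ((s+1) * 2) = z powr s * (-1/(v-u)) / 2"
      using assms by (intro nonzero_mult_divide_mult_cancel_left) simp
    then show ?thesis by (simp add: mult.assoc mult.commute)
  qed
  also have "(v-u)^2 * (- (z * z powr s / (v-u)) - - (z powr s / (2*(v-u)))) = (v-u) * (1/2 - z) * z powr s"
  proof -
    have "\<And>h. h \<noteq> 0 \<Longrightarrow> h^2 * (- (z * z powr s / h) - - (z powr s / (2*h))) = h * (1/2 - z) * z powr s"
      by (simp add: field_simps power2_eq_square)
    from this[of "v-u"] show ?thesis using assms by simp
  qed
  also have "\<dots> = (y - (u+v)/2) * z powr s"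
    using assms by (simp add: z_def field_simps)
  finally show ?thesis unfolding z_def .
qed

definition s_convex_trapezoid_const :: "real \<Rightarrow> real" where
  "s_convex_trapezoid_const s = (s * 2 powr s + 1) / (2 powr s * (s + 1) * (s + 2))"

lemma has_integral_abs_midpoint_powr:
  fixes u v s :: real
  assumes "u < v" "0 < s"
  shows "((\<lambda>y. \<bar>y - (u+v)/2\<bar> * ((v-y)/(v-u)) powr s) has_integral
           ((v-u)^2/2 * s_convex_trapezoid_const s)) {u..v}"
proof -
  define F where "F = powr_midpoint_primitive s u v"
  have "((\<lambda>y. \<bar>y - (u+v)/2\<bar> * ((v-y)/(v-u)) powr s) has_integral (F u + F v - 2 * F ((u+v)/2))) {u..v}"
    using assms has_real_derivative_powr_midpoint_primitive[OF assms] unfolding F_def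
    by (intro has_integral_abs_midpoint_kernel)
      (auto simp: powr_midpoint_primitive_def[abs_def] intro!: continuous_intros continuous_on_powr')
  also have "F u + F v - 2 * F ((u+v)/2) = (v-u)^2/2 * s_convex_trapezoid_const s"
  proof -
    define Q where "Q = (1/2::real) powr s"
    have ne: "s + 1 \<noteq> 0" "s + 2 \<noteq> 0" "v - u \<noteq> 0" using assms by auto
    have half: "(v - (u+v)/2) / (v-u) = 1/2" using assms by (simp add: field_simps)
    have Fu: "F u = (v-u)^2 * s / (2*(s+1)*(s+2))"
      using ne unfolding F_def powr_midpoint_primitive_def by (simp add: field_simps)
    have Fv: "F v = 0"
      using assms unfolding F_def powr_midpoint_primitive_def by simp
    have Fm: "F ((u+v)/2) = - ((v-u)^2 * Q / (4*(s+1)*(s+2)))"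
    proof -
      have p: "(1/2::real) powr (s+2) = Q/4" "(1/2::real) powr (s+1) = Q/2"
        by (simp_all add: Q_def powr_add power2_eq_square)
      have "\<And>a b. a \<noteq> 0 \<Longrightarrow> b \<noteq> 0 \<Longrightarrow> Q/4 / b - Q/2 / (2*a) = Q * (a - b) / (4*a*b)"
        by (simp add: field_simps)
      from this[of "s+1" "s+2"] show ?thesis
        using ne unfolding F_def powr_midpoint_primitive_def half p by simp
    qed
    have Q: "Q = 1 / 2 powr s"
      by (simp add: Q_def powr_divide)
    have sum: "\<And>a b P. a \<noteq> 0 \<Longrightarrow> b \<noteq> 0 \<Longrightarrow> P \<noteq> 0 \<Longrightarrow>
        (v-u)^2 * s / (2*a*b) + 0 - 2 * - ((v-u)^2 * (1/P) / (4*a*b)) = (v-u)^2/2 * ((s * P + 1) / (P * a * b))"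
      by (simp add: field_simps)
    show ?thesis
      unfolding Fu Fv Fm Q s_convex_trapezoid_const_def by (rule sum) (use ne in auto)
  qed
  finally show ?thesis .
qed

lemma s_convex_trapezoid_const_le_half:
  assumes "0 \<le> s"
  shows "s_convex_trapezoid_const s \<le> 1/2"
proof -
  define P where "P = (2::real) powr s"
  have "1 \<le> P" using assms by (simp add: P_def ge_one_powr_ge_zero)
  then have "1 * 2 \<le> P * (s * s + s + 2)"
    using assms by (intro mult_mono) auto
  then have "2 * (s * P + 1) \<le> P * (s + 1) * (s + 2)"
    by (simp add: algebra_simps)
  then show ?thesis
    using \<open>1 \<le> P\<close> assms unfolding s_convex_trapezoid_const_def P_def[symmetric]
    by (simp add: pos_divide_le_eq)
qed

lemma s_convex_trapezoid_const_ge_quarter: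
  assumes "0 \<le> s" "s \<le> 1"
  shows "1/4 \<le> s_convex_trapezoid_const s"
proof -
  define P where "P = (2::real) powr s"
  have "1 \<le> P" using assms by (simp add: P_def ge_one_powr_ge_zero)
  have "P \<le> 2" using assms powr_mono[of s 1 2] by (simp add: P_def)
  have "s * s \<le> s" using assms by (simp add: mult_left_le)
  moreover have "0 \<le> s * s - s + 2" using assms(2) zero_le_square[of s] by linarith
  ultimately have "P * (s * s - s + 2) \<le> 2 * 2"
    using assms \<open>P \<le> 2\<close> by (intro mult_mono) auto
  then have "P * (s + 1) * (s + 2) \<le> 4 * (s * P + 1)"
    by (simp add: algebra_simps)
  then show ?thesis
    using \<open>1 \<le> P\<close> assms unfolding s_convex_trapezoid_const_def P_def[symmetric]
    by (simp add: pos_le_divide_eq)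
qed

lemma has_integral_midpoint_times_derivative:
  fixes f f' :: "real \<Rightarrow> real"
  assumes "u \<le> v" and deriv: "\<And>y. y \<in> {u..v} \<Longrightarrow> (f has_real_derivative f' y) (at y within {u..v})"
  shows "((\<lambda>y. (y - (u+v)/2) * f' y) has_integral ((f u + f v)/2 * (v-u) - integral {u..v} f)) {u..v}"
proof -
  let ?m = "(u+v)/2"
  have "((\<lambda>y. f y + (y - ?m) * f' y) has_integral ((v - ?m) * f v - (u - ?m) * f u)) {u..v}"
  proof (rule fundamental_theorem_of_calculus[OF \<open>u \<le> v\<close>])
    fix y assume "y \<in> {u..v}"
    then show "((\<lambda>y. (y - ?m) * f y) has_vector_derivative f y + (y - ?m) * f' y) (at y within {u..v})"
      unfolding has_real_derivative_iff_has_vector_derivative[symmetric]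
      by (auto intro!: derivative_eq_intros deriv)
  qed
  moreover have "f integrable_on {u..v}"
    using DERIV_continuous_on[OF deriv] by (rule integrable_continuous_real)
  ultimately have "((\<lambda>y. (y - ?m) * f' y) has_integral ((v - ?m) * f v - (u - ?m) * f u - integral {u..v} f)) {u..v}"
    by (auto dest: has_integral_diff[OF _ integrable_integral])
  then show ?thesis
    by (rule has_integral_eq_rhs) (simp add: field_simps)
qed

lemma abs_trapezoid_cell_error_le:
  fixes f f' :: "real \<Rightarrow> real" and A B :: real
  assumes "u < v" "0 < s"
    and deriv: "\<And>y. y \<in> {u..v} \<Longrightarrow> (f has_real_derivative f' y) (at y within {u..v})"
    and bound: "\<And>y. y \<in> {u..v} \<Longrightarrow>
      \<bar>f' y\<bar> \<le> ((v-y)/(v-u)) powr s * A + (1 - ((v-y)/(v-u)) powr s) * B"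
  shows "\<bar>integral {u..v} f - (f u + f v)/2 * (v-u)\<bar> \<le>
    (v-u)^2/2 * (s_convex_trapezoid_const s * A + (1/2 - s_convex_trapezoid_const s) * B)"
proof -
  define C where "C = s_convex_trapezoid_const s"
  define w where "w y = ((v-y)/(v-u)) powr s" for y
  define g where "g y = A * (\<bar>y - (u+v)/2\<bar> * w y) + B * (\<bar>y - (u+v)/2\<bar> - \<bar>y - (u+v)/2\<bar> * w y)" for y
  have kernel: "((\<lambda>y. (y - (u+v)/2) * f' y) has_integral ((f u + f v)/2 * (v-u) - integral {u..v} f)) {u..v}"
    using assms by (intro has_integral_midpoint_times_derivative) auto
  have "(g has_integral (A * ((v-u)^2/2 * C) + B * ((v-u)^2/4 - (v-u)^2/2 * C))) {u..v}"
    unfolding g_def w_def C_def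
    using assms by (intro has_integral_add has_integral_mult_right has_integral_diff
        has_integral_abs_midpoint has_integral_abs_midpoint_powr) auto
  then have g: "(g has_integral ((v-u)^2/2 * (C * A + (1/2 - C) * B))) {u..v}"
    by (rule has_integral_eq_rhs) (simp add: algebra_simps)
  have "norm (integral {u..v} (\<lambda>y. (y - (u+v)/2) * f' y)) \<le> integral {u..v} g"
  proof (rule integral_norm_bound_integral)
    show "(\<lambda>y. (y - (u+v)/2) * f' y) integrable_on {u..v}" "g integrable_on {u..v}"
      using kernel g by blast+
    fix y assume y: "y \<in> {u..v}"
    have "\<bar>(y - (u+v)/2) * f' y\<bar> \<le> \<bar>y - (u+v)/2\<bar> * (w y * A + (1 - w y) * B)"
      unfolding abs_mult w_def using bound[OF y] by (intro mult_left_mono) auto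
    also have "\<dots> = g y"
      by (simp add: g_def algebra_simps)
    finally show "norm ((y - (u+v)/2) * f' y) \<le> g y" by simp
  qed
  then show ?thesis
    unfolding integral_unique[OF kernel] integral_unique[OF g] C_def by (simp add: abs_minus_commute)
qed

lemma abs_trapezoid_cell_error_le_s_convex:
  fixes f f' :: "real \<Rightarrow> real"
  assumes "0 < s" "s \<le> 1" "u < v"
    and "\<And>y. y \<in> {u..v} \<Longrightarrow> (f has_real_derivative f' y) (at y within {u..v})"
    and "s_convex_on s {u..v} (\<lambda>y. \<bar>f' y\<bar>)"
  shows "\<bar>integral {u..v} f - (f u + f v)/2 * (v-u)\<bar> \<le>
    s_convex_trapezoid_const s * ((v-u)^2/2 * (\<bar>f' u\<bar> + \<bar>f' v\<bar>))"
proof -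
  define C where "C = s_convex_trapezoid_const s"
  have "1/2 - C \<le> C"
    using s_convex_trapezoid_const_ge_quarter[of s] assms by (simp add: C_def)
  have "\<bar>integral {u..v} f - (f u + f v)/2 * (v-u)\<bar> \<le> (v-u)^2/2 * (C * \<bar>f' u\<bar> + (1/2 - C) * \<bar>f' v\<bar>)"
    using assms s_convex_on_le_interpolation[OF assms(5)] unfolding C_def
    by (intro abs_trapezoid_cell_error_le) auto
  also have "\<dots> \<le> (v-u)^2/2 * (C * (\<bar>f' u\<bar> + \<bar>f' v\<bar>))"
    using \<open>1/2 - C \<le> C\<close> by (intro mult_left_mono) (auto simp: distrib_left mult_right_mono)
  finally show ?thesis
    by (simp add: C_def mult.left_commute)
qed

lemma le_powr_conjugate_exponents:
  fixes c d p q :: real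
  assumes "0 < c" "c \<le> d" "0 < p" "1/p + 1/q = 1"
  shows "c \<le> d powr (1/p) * c powr (1/q)"
proof -
  have "c = c powr (1/p) * c powr (1/q)"
    using assms by (simp add: powr_add[symmetric])
  also have "\<dots> \<le> d powr (1/p) * c powr (1/q)"
    using assms by (intro mult_right_mono powr_mono2) auto
  finally show ?thesis .
qed

lemma lift_Suc_mono_le_bounded:
  fixes x :: "nat \<Rightarrow> 'a::order"
  assumes "\<And>k. k < n \<Longrightarrow> x k \<le> x (Suc k)" "k \<le> j" "j \<le> n"
  shows "x k \<le> x j"
  by (rule lift_Suc_mono_le_ivl[where N = "{..<n}"]) (use assms in auto)

lemma trap_error_eq_sum_cells:
  assumes mono: "\<And>k. k < n \<Longrightarrow> x k \<le> x (Suc k)" and f: "f integrable_on {x 0..x n}"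
  shows "trap_error f x n =
    (\<Sum>k<n. integral {x k..x (Suc k)} f - (f (x k) + f (x (Suc k))) / 2 * (x (Suc k) - x k))"
proof -
  have x_mono: "x k \<le> x j" if "k \<le> j" "j \<le> n" for k j
    using mono that by (rule lift_Suc_mono_le_bounded)
  have "integral {x 0..x m} f = (\<Sum>k<m. integral {x k..x (Suc k)} f)" if "m \<le> n" for m
    using that
  proof (induction m)
    case (Suc m)
    have "f integrable_on {x 0..x (Suc m)}"
      using Suc.prems x_mono by (intro integrable_on_subinterval[OF f]) auto
    then have "integral {x 0..x m} f + integral {x m..x (Suc m)} f = integral {x 0..x (Suc m)} f"
      using Suc.prems x_mono by (intro Henstock_Kurzweil_Integration.integral_combine) auto
    then show ?case
      using Suc by simp
  qed simp
  then show ?thesis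
    unfolding trap_error_def by (simp add: sum_subtractf)
qed

lemma abs_trap_error_le_s_convex:
  fixes f f' :: "real \<Rightarrow> real" and x :: "nat \<Rightarrow> real"
  assumes s: "0 < s" "s \<le> 1" and part: "\<And>k. k < n \<Longrightarrow> x k < x (Suc k)"
    and deriv: "\<And>y. y \<in> {x 0..x n} \<Longrightarrow> (f has_real_derivative f' y) (at y)"
    and sconv: "s_convex_on s {x 0..x n} (\<lambda>y. \<bar>f' y\<bar>)"
  shows "\<bar>trap_error f x n\<bar> \<le> s_convex_trapezoid_const s *
    (\<Sum>k<n. (x (Suc k) - x k)^2 / 2 * (\<bar>f' (x k)\<bar> + \<bar>f' (x (Suc k))\<bar>))"
proof -
  define C where "C = s_convex_trapezoid_const s"
  define h where "h k = (x (Suc k) - x k)^2 / 2 * (\<bar>f' (x k)\<bar> + \<bar>f' (x (Suc k))\<bar>)" for k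
  have part_le: "\<And>k. k < n \<Longrightarrow> x k \<le> x (Suc k)"
    using part by (simp add: less_imp_le)
  have deriv_within: "\<And>y T. y \<in> {x 0..x n} \<Longrightarrow> (f has_real_derivative f' y) (at y within T)"
    using deriv by (blast intro: has_field_derivative_at_within)
  have cell: "\<bar>integral {x k..x (Suc k)} f - (f (x k) + f (x (Suc k))) / 2 * (x (Suc k) - x k)\<bar>
      \<le> C * h k" if "k < n" for k
  proof -
    have "{x k..x (Suc k)} \<subseteq> {x 0..x n}"
      using that part_le lift_Suc_mono_le_bounded[of n x 0 k] lift_Suc_mono_le_bounded[of n x "Suc k" n]
      by auto
    then show ?thesis
      unfolding C_def h_def using s part[OF that] deriv_within s_convex_on_subset[OF sconv]
      by (intro abs_trapezoid_cell_error_le_s_convex) auto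
  qed
  have "f integrable_on {x 0..x n}"
    by (intro integrable_continuous_real DERIV_continuous_on[OF deriv_within])
  with part_le have "trap_error f x n =
      (\<Sum>k<n. integral {x k..x (Suc k)} f - (f (x k) + f (x (Suc k))) / 2 * (x (Suc k) - x k))"
    by (rule trap_error_eq_sum_cells)
  then have "\<bar>trap_error f x n\<bar> \<le> (\<Sum>k<n. C * h k)"
    using cell by (auto intro: order.trans[OF sum_abs] sum_mono)
  then show ?thesis
    by (simp add: C_def h_def sum_distrib_left)
qed

theorem proposition4:
  fixes s p q a b :: real and I :: "real set" and f f' :: "real \<Rightarrow> real"
    and x :: "nat \<Rightarrow> real" and n :: nat
  assumes s: "0 < s" "s \<le> 1"
    and p: "p > 1" and q: "q = p / (p - 1)"
    and I: "is_interval I"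
    and ab: "a \<in> interior I" "b \<in> interior I" "a < b"
    and deriv: "\<And>y. y \<in> interior I \<Longrightarrow> (f has_real_derivative f' y) (at y)"
    and L1: "set_integrable lborel {a..b} f'"
    and sconv: "s_convex_on s {a..b} (\<lambda>y. \<bar>f' y\<bar>)"
    and part: "x 0 = a" "x n = b" "\<And>k. k < n \<Longrightarrow> x k < x (Suc k)"
  shows "\<bar>trap_error f x n\<bar> \<le>
    1 / 2 powr (1 / p)
    * ((s * 2 powr s + 1) / (2 powr s * (s + 1) * (s + 2))) powr (1 / q)
    * (\<Sum>k<n. (x (Suc k) - x k)^2 / 2 * (\<bar>f' (x k)\<bar> + \<bar>f' (x (Suc k))\<bar>))"
proof -
  define C where "C = s_convex_trapezoid_const s"
  define H where "H = (\<Sum>k<n. (x (Suc k) - x k)^2 / 2 * (\<bar>f' (x k)\<bar> + \<bar>f' (x (Suc k))\<bar>))"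
  have "{a..b} \<subseteq> interior I"
    using I ab by (auto intro: mem_is_interval_1_I simp: is_interval_convex_1)
  then have "\<bar>trap_error f x n\<bar> \<le> C * H"
    unfolding C_def H_def using s part sconv deriv
    by (intro abs_trap_error_le_s_convex) auto
  also have "\<dots> \<le> (1/2) powr (1/p) * C powr (1/q) * H"
  proof (rule mult_right_mono)
    have "1/p + 1/q = 1"
      using p unfolding q by (simp add: field_simps)
    then show "C \<le> (1/2) powr (1/p) * C powr (1/q)"
      using p s s_convex_trapezoid_const_le_half[of s] s_convex_trapezoid_const_ge_quarter[of s]
      unfolding C_def by (intro le_powr_conjugate_exponents) auto
    show "0 \<le> H"
      unfolding H_def by (intro sum_nonneg) auto
  qed
  finally show ?thesis
    by (simp add: C_def H_def s_convex_trapezoid_const_def powr_divide)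
qed

end
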